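(* Assume (A1)–(A3) and (A6). Let $\Omega_n\in\mathcal O'$ ($n\in\mathbb N$) and let $\Omega\subseteq D$ be open with $\overline{\Gamma_0}\subseteq\partial\Omega$ and $\partial\Omega\setminus(Q_1\cup Q_2)=\Gamma_0$, such that $\partial\Omega_n\to\partial\Omega$ in the Hausdorff metric on compact sets. If the compact sets $\Gamma_1^n:=\partial\Omega_n\cap Q_1$ converge in the Hausdorff metric to a compact set $L$, then $L=\partial\Omega\cap Q_1$.
   Context: (A1) $D\subset\mathbb R^d$, $d\ge2$, open bounded. (A2) $V>0$, $\varepsilon>0$ fixed. (A3) $M\subset\overline D$ is a compact $(d-1)$-dimensional Lipschitz manifold with boundary, $\Gamma_0:=M\setminus\partial M$, with finitely many connected components having pairwise disjoint closures. (A6) $Q_1,Q_2\subseteq\overline D$ are disjoint compact sets with $\overline{\Gamma_0}\setminus(Q_1\cup Q_2)=\Gamma_0$. For $y,\xi\in\mathbb R^d$, $|\xi|=1$, $C(y,\xi,\varepsilon)=\{z:(z-y)\cdot\xi\ge|z-y|\cos\varepsilon,\ 0<|z-y|<\varepsilon\}$; an open $\Omega$ has the $\varepsilon$-cone property if for every $x\in\partial\Omega$ there is a unit $\xi_x$ with $C(y,\xi_x,\varepsilon)\subset\Omega$ for all $y\in\overline\Omega\cap B(x,\varepsilon)$. $\mathcal O'$ is the set of open connected $\Omega\subseteq D$ with the $\varepsilon$-cone property, $|\Omega|=V$, $\Gamma_0\subset\partial\Omega$ and $\partial\Omega\setminus(Q_1\cup Q_2)=\Gamma_0$ (for such $\Omega$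 one has $\overline{\Gamma_0}\subseteq\partial\Omega$). *)

theory Defs
  imports "HOL-Analysis.Analysis"
begin

text \<open>Model space for (d-1)-dimensional manifolds with boundary inside a
d-dimensional Euclidean space: a closed half of a hyperplane,
determined by orthonormal vectors u (normal of the hyperplane) and v
(inner normal of the edge).\<close>

definition half_hyperplane :: "'a::euclidean_space \<Rightarrow> 'a \<Rightarrow> 'a set" where
  "half_hyperplane u v = {x. x \<bullet> u = 0 \<and> x \<bullet> v \<ge> 0}"

definition is_lipschitz :: "'a::metric_space set \<Rightarrow> ('a \<Rightarrow> 'b::metric_space) \<Rightarrow> bool" where
  "is_lipschitz X f \<longleftrightarrow> (\<exists>C. C-lipschitz_on X f)"

definition lip_chart :: "'a::euclidean_space set \<Rightarrow> 'a \<Rightarrow> 'a set \<Rightarrow> 'a set \<Rightarrow>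
     ('a \<Rightarrow> 'a) \<Rightarrow> ('a \<Rightarrow> 'a) \<Rightarrow> 'a \<Rightarrow> 'a \<Rightarrow> bool" where
  "lip_chart M p U W f g u v \<longleftrightarrow>
     norm u = 1 \<and> norm v = 1 \<and> u \<bullet> v = 0 \<and>
     openin (top_of_set M) U \<and> p \<in> U \<and>
     openin (top_of_set (half_hyperplane u v)) W \<and>
     homeomorphism U W f g \<and> is_lipschitz U f \<and> is_lipschitz W g"

definition lipschitz_manifold_with_boundary :: "'a::euclidean_space set \<Rightarrow> bool" where
  "lipschitz_manifold_with_boundary M \<longleftrightarrow>
     (\<forall>p\<in>M. \<exists>U W f g u v. lip_chart M p U W f g u v)"

definition manifold_boundary :: "'a::euclidean_space set \<Rightarrow> 'a set" where
  "manifold_boundary M =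
     {p\<in>M. \<exists>U W f g u v. lip_chart M p U W f g u v \<and> f p \<bullet> v = 0}"

definition cone_set :: "'a::euclidean_space \<Rightarrow> 'a \<Rightarrow> real \<Rightarrow> 'a set" where
  "cone_set y \<xi> \<epsilon> = {z. (z - y) \<bullet> \<xi> \<ge> norm (z - y) * cos \<epsilon> \<and>
                         0 < norm (z - y) \<and> norm (z - y) < \<epsilon>}"

definition cone_property :: "real \<Rightarrow> 'a::euclidean_space set \<Rightarrow> bool" where
  "cone_property \<epsilon> \<Omega> \<longleftrightarrow>
     (\<forall>x\<in>frontier \<Omega>. \<exists>\<xi>. norm \<xi> = 1 \<and>
        (\<forall>y\<in>closure \<Omega> \<inter> ball x \<epsilon>. cone_set y \<xi> \<epsilon> \<subseteq> \<Omega>))"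

definition admissible :: "'a::euclidean_space set \<Rightarrow> real \<Rightarrow> real \<Rightarrow> 'a set \<Rightarrow>
      'a set \<Rightarrow> 'a set \<Rightarrow> 'a set \<Rightarrow> bool" where
  "admissible D V \<epsilon> \<Gamma>0 Q1 Q2 \<Omega> \<longleftrightarrow>
     open \<Omega> \<and> connected \<Omega> \<and> \<Omega> \<subseteq> D \<and> cone_property \<epsilon> \<Omega> \<and>
     emeasure lebesgue \<Omega> = ennreal V \<and>
     \<Gamma>0 \<subseteq> frontier \<Omega> \<and> frontier \<Omega> - (Q1 \<union> Q2) = \<Gamma>0"

text \<open>Hausdorff distance (used for nonempty compact sets).\<close>
definition hausdist :: "'a::metric_space set \<Rightarrow> 'a set \<Rightarrow> real" where
  "hausdist A B = max (SUP a\<in>A. infdist a B) (SUP b\<in>B. infdist b A)"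

text \<open>Convergence in the Hausdorff metric on compact sets (including the
empty set, which is at positive distance from every nonempty compact set).\<close>
definition hausdorff_conv :: "(nat \<Rightarrow> 'a::metric_space set) \<Rightarrow> 'a set \<Rightarrow> bool" where
  "hausdorff_conv A B \<longleftrightarrow>
     (B = {} \<and> (\<forall>\<^sub>F n in sequentially. A n = {})) \<or>
     (B \<noteq> {} \<and> (\<forall>\<^sub>F n in sequentially. A n \<noteq> {}) \<and>
        ((\<lambda>n. hausdist (A n) B) \<longlonglongrightarrow> 0))"

end

theory Submission
  imports Defs
begin

text \<open>For compact sets, Hausdorff convergence \<open>A n \<rightarrow> L\<close> forces \<open>L\<close> to be the Kuratowski
lower limit of the \<open>A n\<close>: the set of points that are limits of points of the \<open>A n\<close>.
Applied to \<open>\<partial>\<Omega>\<^sub>n \<rightarrow> \<partial>\<Omega>\<close> and \<open>\<partial>\<Omega>\<^sub>n \<inter> Q\<^sub>1 \<rightarrow> L\<close>, this makes the claim a statement about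
approximating points. A limit of points of \<open>\<partial>\<Omega>\<^sub>n \<inter> Q\<^sub>1\<close> lies in \<open>\<partial>\<Omega>\<close> and, \<open>Q\<^sub>1\<close> being closed,
in \<open>Q\<^sub>1\<close>. Conversely, let \<open>x \<in> \<partial>\<Omega> \<inter> Q\<^sub>1\<close>. If \<open>x\<close> lies in the closure of \<open>\<Gamma>\<^sub>0\<close>, it lies in
every \<open>\<partial>\<Omega>\<^sub>n\<close>. Otherwise \<open>x\<close> has a neighbourhood missing the closed set \<open>closure \<Gamma>\<^sub>0 \<union> Q\<^sub>2\<close>,
and since \<open>\<partial>\<Omega>\<^sub>n \<subseteq> \<Gamma>\<^sub>0 \<union> Q\<^sub>1 \<union> Q\<^sub>2\<close>, the points of \<open>\<partial>\<Omega>\<^sub>n\<close> approximating \<open>x\<close> lie in \<open>Q\<^sub>1\<close>.\<close>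

lemma infdist_le_hausdist_left:
  assumes "compact A" "a \<in> A"
  shows "infdist a B \<le> hausdist A B"
proof -
  have "bdd_above ((\<lambda>x. infdist x B) ` A)"
    by (intro bounded_imp_bdd_above compact_imp_bounded compact_continuous_image
        continuous_on_infdist continuous_on_id assms)
  then have "infdist a B \<le> (SUP x\<in>A. infdist x B)"
    using assms by (intro cSUP_upper) auto
  then show ?thesis
    unfolding hausdist_def by linarith
qed

lemma infdist_le_hausdist_right:
  assumes "compact B" "b \<in> B"
  shows "infdist b A \<le> hausdist A B"
proof -
  have "bdd_above ((\<lambda>x. infdist x A) ` B)"
    by (intro bounded_imp_bdd_above compact_imp_bounded compact_continuous_image
        continuous_on_infdist continuous_on_id assms)
  then have "infdist b A \<le> (SUP x\<in>B. infdist x A)"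
    using assms by (intro cSUP_upper) auto
  then show ?thesis
    unfolding hausdist_def by linarith
qed

lemma infdist_less_imp_ex_dist_less:
  assumes "infdist x A < e" "A \<noteq> {}"
  shows "\<exists>a\<in>A. dist x a < e"
proof -
  have "bdd_below (dist x ` A)"
    by (rule bdd_belowI2[of _ 0]) simp
  with assms show ?thesis
    by (simp add: infdist_notempty cINF_less_iff)
qed

definition kuratowski_liminf :: "(nat \<Rightarrow> 'a::metric_space set) \<Rightarrow> 'a set" where
  "kuratowski_liminf A = {x. \<forall>e>0. \<forall>\<^sub>F n in sequentially. \<exists>a\<in>A n. dist x a < e}"

lemma hausdorff_limit_subset_kuratowski_liminf:
  assumes conv: "hausdorff_conv A L" and "compact L"
  shows "L \<subseteq> kuratowski_liminf A"
proof
  fix x assume x: "x \<in> L"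
  have nonempty: "\<forall>\<^sub>F n in sequentially. A n \<noteq> {}"
    and lim: "(\<lambda>n. hausdist (A n) L) \<longlonglongrightarrow> 0"
    using conv x unfolding hausdorff_conv_def by auto
  have "\<forall>\<^sub>F n in sequentially. \<exists>a\<in>A n. dist x a < e" if "e > 0" for e
    using nonempty order_tendstoD(2)[OF lim \<open>e > 0\<close>]
  proof eventually_elim
    case (elim n)
    then have "infdist x (A n) < e"
      using infdist_le_hausdist_right[OF \<open>compact L\<close> x, of "A n"] by linarith
    then show ?case
      using elim infdist_less_imp_ex_dist_less by blast
  qed
  then show "x \<in> kuratowski_liminf A"
    unfolding kuratowski_liminf_def by blast
qed

lemma kuratowski_liminf_subset_hausdorff_limit:
  assumes conv: "hausdorff_conv A L" and compact: "\<And>n. compact (A n)" "compact L"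
  shows "kuratowski_liminf A \<subseteq> L"
proof
  fix x assume "x \<in> kuratowski_liminf A"
  then have approx: "\<forall>\<^sub>F n in sequentially. \<exists>a\<in>A n. dist x a < e" if "e > 0" for e
    using that unfolding kuratowski_liminf_def by blast
  have "L \<noteq> {}"
  proof
    assume "L = {}"
    then have "\<forall>\<^sub>F n in sequentially. A n = {}"
      using conv unfolding hausdorff_conv_def by auto
    with approx[OF zero_less_one] have "\<forall>\<^sub>F n in sequentially. False"
      by eventually_elim auto
    then show False
      by simp
  qed
  then have lim: "(\<lambda>n. hausdist (A n) L) \<longlonglongrightarrow> 0"
    using conv unfolding hausdorff_conv_def by auto
  have small: "infdist x L < 2 * e" if "e > 0" for e
  proof -
    obtain n a where "hausdist (A n) L < e" "a \<in> A n" "dist x a < e"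
      using eventually_conj[OF order_tendstoD(2)[OF lim \<open>e > 0\<close>] approx[OF \<open>e > 0\<close>]]
      by (auto simp: eventually_sequentially)
    moreover have "infdist a L \<le> hausdist (A n) L"
      using infdist_le_hausdist_left[OF compact(1)] \<open>a \<in> A n\<close> by blast
    ultimately show ?thesis
      using infdist_triangle[of x L a] by linarith
  qed
  then have "infdist x L = 0"
    using small[of "infdist x L / 2"] infdist_nonneg[of x L] by fastforce
  then show "x \<in> L"
    using in_closed_iff_infdist_zero[OF compact_imp_closed[OF compact(2)] \<open>L \<noteq> {}\<close>] by blast
qed

lemma hausdorff_limit_eq_kuratowski_liminf:
  assumes "hausdorff_conv A L" "\<And>n. compact (A n)" "compact L"
  shows "L = kuratowski_liminf A"
  using hausdorff_limit_subset_kuratowski_liminf kuratowski_liminf_subset_hausdorff_limit assms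
  by (intro equalityI) blast+

lemma kuratowski_liminf_mono:
  assumes "\<And>n. A n \<subseteq> B n"
  shows "kuratowski_liminf A \<subseteq> kuratowski_liminf B"
proof
  fix x assume "x \<in> kuratowski_liminf A"
  then have "\<forall>\<^sub>F n in sequentially. \<exists>a\<in>A n. dist x a < e" if "e > 0" for e
    using that unfolding kuratowski_liminf_def by blast
  then have "\<forall>\<^sub>F n in sequentially. \<exists>a\<in>B n. dist x a < e" if "e > 0" for e
    using that assms by (blast intro: eventually_mono)
  then show "x \<in> kuratowski_liminf B"
    unfolding kuratowski_liminf_def by blast
qed

lemma kuratowski_liminf_subset_closed:
  assumes "closed S" "\<And>n. A n \<subseteq> S"
  shows "kuratowski_liminf A \<subseteq> S"
proof
  fix x assume x: "x \<in> kuratowski_liminf A"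
  have "\<exists>a\<in>S. dist a x < e" if "e > 0" for e
  proof -
    have "\<forall>\<^sub>F n in sequentially. \<exists>a\<in>A n. dist x a < e"
      using x \<open>e > 0\<close> unfolding kuratowski_liminf_def by blast
    then obtain n where "\<exists>a\<in>A n. dist x a < e"
      using eventually_happens'[OF sequentially_bot] by blast
    then show ?thesis
      using assms(2) by (auto simp: dist_commute)
  qed
  then show "x \<in> S"
    using closure_approachable closure_closed[OF \<open>closed S\<close>] by blast
qed

lemma kuratowski_liminf_Int_subset:
  assumes "closed C" "closed Q" "P \<inter> Q = {}"
    and between: "\<And>n. C \<subseteq> F n" "\<And>n. F n \<subseteq> C \<union> P \<union> Q"
  shows "kuratowski_liminf F \<inter> P \<subseteq> kuratowski_liminf (\<lambda>n. F n \<inter> P)"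
proof
  fix x assume x: "x \<in> kuratowski_liminf F \<inter> P"
  show "x \<in> kuratowski_liminf (\<lambda>n. F n \<inter> P)"
  proof (cases "x \<in> C")
    case True
    then show ?thesis
      using x between(1) unfolding kuratowski_liminf_def
      by (auto intro!: always_eventually bexI[of _ x])
  next
    case False
    then have "x \<in> - (C \<union> Q)"
      using x \<open>P \<inter> Q = {}\<close> by blast
    then obtain r where "r > 0" and r: "ball x r \<subseteq> - (C \<union> Q)"
      using \<open>closed C\<close> \<open>closed Q\<close> open_contains_ball by (metis closed_Un open_Compl)
    have "\<forall>\<^sub>F n in sequentially. \<exists>a\<in>F n \<inter> P. dist x a < e" if "e > 0" for e
    proof -
      have "min e r > 0"
        using \<open>e > 0\<close> \<open>r > 0\<close> by simp
      with x have "\<forall>\<^sub>F n in sequentially. \<exists>a\<in>F n. dist x a < min e r"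
        unfolding kuratowski_liminf_def by blast
      then show ?thesis
      proof eventually_elim
        case (elim n)
        then obtain a where "a \<in> F n" "dist x a < min e r"
          by blast
        moreover from this have "a \<notin> C \<union> Q"
          using r by auto
        ultimately show ?case
          using between(2) by auto
      qed
    qed
    then show ?thesis
      unfolding kuratowski_liminf_def by blast
  qed
qed

theorem mainTheorem6:
  fixes D M Q1 Q2 \<Omega> L :: "'a::euclidean_space set"
    and \<Omega>s :: "nat \<Rightarrow> 'a set"
    and V \<epsilon> :: real
  defines "\<Gamma>0 \<equiv> M - manifold_boundary M"
  assumes dim: "DIM('a) \<ge> 2"
    and A1: "open D" "bounded D"
    and A2: "V > 0" "\<epsilon> > 0"
    and A3: "compact M" "M \<subseteq> closure D" "lipschitz_manifold_with_boundary M"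
       "finite {connected_component_set \<Gamma>0 x | x. x \<in> \<Gamma>0}"
       "\<forall>C\<in>{connected_component_set \<Gamma>0 x | x. x \<in> \<Gamma>0}.
          \<forall>C'\<in>{connected_component_set \<Gamma>0 x | x. x \<in> \<Gamma>0}.
            C \<noteq> C' \<longrightarrow> closure C \<inter> closure C' = {}"
    and A6: "compact Q1" "compact Q2" "Q1 \<subseteq> closure D" "Q2 \<subseteq> closure D"
       "Q1 \<inter> Q2 = {}" "closure \<Gamma>0 - (Q1 \<union> Q2) = \<Gamma>0"
    and seq: "\<forall>n. admissible D V \<epsilon> \<Gamma>0 Q1 Q2 (\<Omega>s n)"
    and lim: "open \<Omega>" "\<Omega> \<subseteq> D" "closure \<Gamma>0 \<subseteq> frontier \<Omega>"
       "frontier \<Omega> - (Q1 \<union> Q2) = \<Gamma>0"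
    and hconv: "hausdorff_conv (\<lambda>n. frontier (\<Omega>s n)) (frontier \<Omega>)"
    and L: "compact L" "hausdorff_conv (\<lambda>n. frontier (\<Omega>s n) \<inter> Q1) L"
  shows "L = frontier \<Omega> \<inter> Q1"
proof -
  have compact_frontier: "compact (frontier S)" if "S \<subseteq> D" for S
    using that A1(2) bounded_subset compact_frontier_bounded by blast
  have adm: "\<Gamma>0 \<subseteq> frontier (\<Omega>s n)" "frontier (\<Omega>s n) - (Q1 \<union> Q2) = \<Gamma>0" "\<Omega>s n \<subseteq> D" for n
    using seq unfolding admissible_def by auto
  have between: "closure \<Gamma>0 \<subseteq> frontier (\<Omega>s n)" "frontier (\<Omega>s n) \<subseteq> closure \<Gamma>0 \<union> Q1 \<union> Q2"
    for n
    using adm(1,2)[of n] closure_minimal[OF adm(1)[of n] frontier_closed] closure_subset[of \<Gamma>0]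
    by blast+
  have compact: "compact (frontier (\<Omega>s n))" "compact (frontier (\<Omega>s n) \<inter> Q1)" for n
    using compact_frontier[OF adm(3)] compact_Int A6(1) by blast+
  have L_eq: "L = kuratowski_liminf (\<lambda>n. frontier (\<Omega>s n) \<inter> Q1)"
    using hausdorff_limit_eq_kuratowski_liminf[OF L(2) compact(2) L(1)] .
  have frontier_eq: "frontier \<Omega> = kuratowski_liminf (\<lambda>n. frontier (\<Omega>s n))"
    using hausdorff_limit_eq_kuratowski_liminf[OF hconv compact(1) compact_frontier[OF lim(2)]] .
  have "L \<subseteq> frontier \<Omega>"
    unfolding L_eq frontier_eq by (rule kuratowski_liminf_mono) blast
  moreover have "L \<subseteq> Q1"
    unfolding L_eq using compact_imp_closed[OF A6(1)]
    by (rule kuratowski_liminf_subset_closed) blast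
  moreover have "frontier \<Omega> \<inter> Q1 \<subseteq> L"
    unfolding L_eq frontier_eq
    by (rule kuratowski_liminf_Int_subset[OF closed_closure compact_imp_closed[OF A6(2)] A6(5) between])
  ultimately show ?thesis
    by blast
qed

end
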